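(* Let $(r_t)_{t\ge0}$ and $(\delta_t)_{t\ge0}$ be sequences of non-negative real numbers, and let $g>1$ and $N\ge0$. Suppose that $r_t\le g\,\delta_t-\delta_{t+1}+N$ for all $t\ge0$. Then for every $T\ge1$, $$\min_{0\le t\le T-1}r_t\le\frac{g^T}{T}\delta_0+N.$$ *)

theory Defs
  imports Complex_Main
begin

end

theory Submission
  imports Defs
begin

text \<open>Let \<open>m\<close> be the minimum of \<open>r\<close> over the first \<open>T\<close> steps, so that
  \<open>m - N \<le> g \<delta>(t) - \<delta>(t+1)\<close> for \<open>t < T\<close>. Weighting the \<open>t\<close>-th inequality by
  \<open>g^(T-1-t)\<close> makes the sum telescope to
  \<open>(m - N) (1 + g + \<dots> + g^(T-1)) \<le> g^T \<delta>(0) - \<delta>(T) \<le> g^T \<delta>(0)\<close>, and for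
  \<open>g \<ge> 1\<close> the geometric sum is at least \<open>T\<close>.\<close>

lemma weighted_telescoping_le:
  fixes \<delta> :: "nat \<Rightarrow> 'a::linordered_idom" and g c :: 'a
  assumes "g \<ge> 0" and "\<And>t. t < n \<Longrightarrow> c \<le> g * \<delta> t - \<delta> (Suc t)"
  shows "c * (\<Sum>k<n. g ^ k) \<le> g ^ n * \<delta> 0 - \<delta> n"
  using assms(2)
proof (induction n)
  case 0
  then show ?case by simp
next
  case (Suc n)
  have IH: "c * (\<Sum>k<n. g ^ k) \<le> g ^ n * \<delta> 0 - \<delta> n"
    using Suc by simp
  have step: "c \<le> g * \<delta> n - \<delta> (Suc n)"
    using Suc.prems by simp
  have "c * (\<Sum>k<Suc n. g ^ k) = g * (c * (\<Sum>k<n. g ^ k)) + c"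
    by (simp add: sum.lessThan_Suc_shift sum_distrib_left algebra_simps
             del: sum.lessThan_Suc)
  also have "\<dots> \<le> g * (g ^ n * \<delta> 0 - \<delta> n) + c"
    using IH assms(1) by (simp add: mult_left_mono)
  also have "\<dots> \<le> g ^ Suc n * \<delta> 0 - \<delta> (Suc n)"
    using step by (simp add: algebra_simps)
  finally show ?case .
qed

lemma of_nat_le_geometric_sum:
  fixes g :: "'a::linordered_semidom"
  assumes "g \<ge> 1"
  shows "of_nat n \<le> (\<Sum>k<n. g ^ k)"
proof -
  have "(\<Sum>k<n. (1::'a)) \<le> (\<Sum>k<n. g ^ k)"
    using assms by (intro sum_mono one_le_power)
  then show ?thesis by simp
qed

lemma uniform_decrease_bound:
  fixes \<delta> :: "nat \<Rightarrow> real" and g c :: real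
  assumes "g \<ge> 1" and "T \<ge> 1" and "\<delta> T \<ge> 0" and "\<delta> 0 \<ge> 0"
    and decrease: "\<And>t. t < T \<Longrightarrow> c \<le> g * \<delta> t - \<delta> (Suc t)"
  shows "c \<le> g ^ T / real T * \<delta> 0"
proof (cases "c \<le> 0")
  case True
  have "g ^ T / real T * \<delta> 0 \<ge> 0"
    using assms by simp
  with True show ?thesis by linarith
next
  case False
  have "c * real T \<le> c * (\<Sum>k<T. g ^ k)"
    using False of_nat_le_geometric_sum[OF \<open>g \<ge> 1\<close>] by (simp add: mult_left_mono)
  also have "\<dots> \<le> g ^ T * \<delta> 0"
    using weighted_telescoping_le[of g T c \<delta>] decrease assms by simp
  finally show ?thesis
    using \<open>T \<ge> 1\<close> by (simp add: field_simps)
qed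

theorem lemmaA8:
  fixes r \<delta> :: "nat \<Rightarrow> real" and g N :: real and T :: nat
  assumes r_nonneg: "\<And>t. r t \<ge> 0"
    and \<delta>_nonneg: "\<And>t. \<delta> t \<ge> 0"
    and g_gt: "g > 1"
    and N_nonneg: "N \<ge> 0"
    and rec: "\<And>t. r t \<le> g * \<delta> t - \<delta> (Suc t) + N"
    and T_ge: "T \<ge> 1"
  shows "Min (r ` {0..T-1}) \<le> g ^ T / real T * \<delta> 0 + N"
proof -
  let ?m = "Min (r ` {0..T-1})"
  have "?m - N \<le> g * \<delta> t - \<delta> (Suc t)" if "t < T" for t
  proof -
    have "?m \<le> r t"
      using that by (intro Min_le) auto
    with rec[of t] show ?thesis by linarith
  qed
  then have "?m - N \<le> g ^ T / real T * \<delta> 0"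
    using uniform_decrease_bound g_gt T_ge \<delta>_nonneg by simp
  then show ?thesis by simp
qed

end
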